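(* Fix an architecture $(\mathbf d,\mathbf k,\mathbf s)$ of depth $N$, a loss $\ell:\mathbb{R}^{d_N}\times\mathbb{R}^{d_N}\to\mathbb{R}$, and data $X=(x_1,\dots,x_m)\in\mathbb{R}^{d_0\times m}$, $Y=(y_1,\dots,y_m)\in\mathbb{R}^{d_N\times m}$, and let $\mathcal{L}(\vec w)=\sum_{i=1}^m\ell(\Pi(\vec w)x_i,y_i)$. Assume that $XX^\top$ has full rank and that there is a constant $c\in\mathbb{R}$ such that for all $x\in\mathbb{R}^{d_0}$, $y\in\mathbb{R}^{d_N}$ and all $W\in\mathbb{R}^{d_N\times d_0}$, \[ \|Wx-y\|_1\le\ell(Wx,y)+c. \] Then there exists a non-decreasing function $g:\mathbb{R}\to\mathbb{R}_{\ge0}$ such that $\|\pi(\vec w)\|_1\le g(\mathcal{L}(\vec w))$ for all $\vec w\in\mathbb{R}^{\sum_{i=1}^N k_i}$.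
   Context: An architecture of depth $N$ is a triple $(\mathbf d,\mathbf k,\mathbf s)=((d_0,\dots,d_N),(k_1,\dots,k_N),(s_1,\dots,s_N))$ of positive integers with $d_i=\frac{d_{i-1}-k_i}{s_i}+1$. For a filter $w\in\mathbb{R}^{k}$ and stride $s$, the convolutional matrix $\Pi_{(d',d''),k,s}(w)\in\mathbb{R}^{d''\times d'}$ has entries $W_{j,(j-1)s+n}=w_n$ ($j\le d''$, $n\le k$) and zeros elsewhere. For $\vec w=(w^{(1)},\dots,w^{(N)})$, $w^{(i)}\in\mathbb{R}^{k_i}$, $\Pi(\vec w):=W_N\cdots W_1$ with $W_i=\Pi_{(d_{i-1},d_i),k_i,s_i}(w^{(i)})$; this is a convolutional matrix with stride $\prod_i s_i$ and filter width $k_v=k_1+\sum_{i=2}^N(k_i-1)\prod_{m=1}^{i-1}s_m$, and its filter is denoted $\pi(\vec w)\in\mathbb{R}^{k_v}$. $\|\cdot\|_1$ is the $\ell_1$-norm of a vector. *)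

theory Defs
  imports "Jordan_Normal_Form.DL_Rank"
begin

definition architecture :: "nat \<Rightarrow> (nat \<Rightarrow> nat) \<Rightarrow> (nat \<Rightarrow> nat) \<Rightarrow> (nat \<Rightarrow> nat) \<Rightarrow> bool" where
  "architecture N d k s \<longleftrightarrow> N \<ge> 1 \<and> (\<forall>i\<le>N. d i > 0) \<and>
     (\<forall>i\<in>{1..N}. k i > 0 \<and> s i > 0 \<and>
        real (d i) = (real (d (i - 1)) - real (k i)) / real (s i) + 1)"

text \<open>Convolutional matrix Pi_{(d',d''),k,s}(w) in R^{d'' x d'} (0-indexed):
  entry (j,p) is w_n if p = j*s + n with n < k, and 0 otherwise.\<close>
definition conv_mat :: "nat \<Rightarrow> nat \<Rightarrow> nat \<Rightarrow> nat \<Rightarrow> real vec \<Rightarrow> real mat" where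
  "conv_mat d' d'' k s w = mat d'' d'
     (\<lambda>(j, p). if j * s \<le> p \<and> p - j * s < k then w $ (p - j * s) else 0)"

text \<open>Parameters: a list ws of N filters, ws ! (i-1) = w^(i) in R^{k i}.\<close>
definition valid_params :: "nat \<Rightarrow> (nat \<Rightarrow> nat) \<Rightarrow> real vec list \<Rightarrow> bool" where
  "valid_params N k ws \<longleftrightarrow> length ws = N \<and> (\<forall>i<N. dim_vec (ws ! i) = k (Suc i))"

fun Pi_partial :: "(nat \<Rightarrow> nat) \<Rightarrow> (nat \<Rightarrow> nat) \<Rightarrow> (nat \<Rightarrow> nat) \<Rightarrow> real vec list \<Rightarrow> nat \<Rightarrow> real mat" where
  "Pi_partial d k s ws 0 = 1\<^sub>m (d 0)"
| "Pi_partial d k s ws (Suc i) =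
     conv_mat (d i) (d (Suc i)) (k (Suc i)) (s (Suc i)) (ws ! i) * Pi_partial d k s ws i"

definition Pi_net :: "nat \<Rightarrow> (nat \<Rightarrow> nat) \<Rightarrow> (nat \<Rightarrow> nat) \<Rightarrow> (nat \<Rightarrow> nat) \<Rightarrow> real vec list \<Rightarrow> real mat" where
  "Pi_net N d k s ws = Pi_partial d k s ws N"

definition filter_width :: "nat \<Rightarrow> (nat \<Rightarrow> nat) \<Rightarrow> (nat \<Rightarrow> nat) \<Rightarrow> nat" where
  "filter_width N k s = k 1 + (\<Sum>i=2..N. (k i - 1) * (\<Prod>m=1..i-1. s m))"

text \<open>The filter pi(w) of the convolutional matrix Pi(w): its first row, entries 0..k_v-1.\<close>
definition pi_filter :: "nat \<Rightarrow> (nat \<Rightarrow> nat) \<Rightarrow> (nat \<Rightarrow> nat) \<Rightarrow> (nat \<Rightarrow> nat) \<Rightarrow> real vec list \<Rightarrow> real vec" where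
  "pi_filter N d k s ws = vec (filter_width N k s) (\<lambda>n. Pi_net N d k s ws $$ (0, n))"

definition l1norm :: "real vec \<Rightarrow> real" where
  "l1norm v = (\<Sum>i<dim_vec v. \<bar>v $ i\<bar>)"

definition net_loss :: "nat \<Rightarrow> (nat \<Rightarrow> nat) \<Rightarrow> (nat \<Rightarrow> nat) \<Rightarrow> (nat \<Rightarrow> nat) \<Rightarrow>
    (real vec \<Rightarrow> real vec \<Rightarrow> real) \<Rightarrow> nat \<Rightarrow> real mat \<Rightarrow> real mat \<Rightarrow> real vec list \<Rightarrow> real" where
  "net_loss N d k s lossf m X Y ws = (\<Sum>i<m. lossf (Pi_net N d k s ws *\<^sub>v col X i) (col Y i))"

end

theory Submission
  imports Defs
begin

text \<open>Since \<open>X X\<^sup>T\<close> is invertible, every matrix \<open>W\<close> is recovered from \<open>W X\<close> as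
  \<open>W = (W X) X\<^sup>T (X X\<^sup>T)\<inverse>\<close>, so the entries of \<open>\<Pi>(w)\<close> are bounded linearly by those of
  \<open>\<Pi>(w) X\<close>. The entries of \<open>\<Pi>(w) x\<^sub>i\<close> in turn are bounded by \<open>\<parallel>\<Pi>(w) x\<^sub>i - y\<^sub>i\<parallel>\<^sub>1 + \<parallel>y\<^sub>i\<parallel>\<^sub>1\<close>,
  hence by the loss. Finally the filter \<open>\<pi>(w)\<close> is an initial segment of the first row of
  \<open>\<Pi>(w)\<close>, because an architecture satisfies \<open>d\<^sub>0 = k\<^sub>v + (d\<^sub>N - 1) s\<^sub>1\<cdots>s\<^sub>N \<ge> k\<^sub>v\<close>.\<close>

lemma architecture_input_dim:
  assumes arch: "architecture N d k s" and j: "1 \<le> j" "j \<le> N"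
  shows "real (d 0) = real (filter_width j k s) + (real (d j) - 1) * (\<Prod>m=1..j. real (s m))"
  using j
proof (induction j)
  case 0
  then show ?case by simp
next
  case (Suc j)
  have "k (Suc j) > 0" "s (Suc j) > 0"
    and "real (d (Suc j)) = (real (d j) - real (k (Suc j))) / real (s (Suc j)) + 1"
    using arch Suc.prems unfolding architecture_def by auto
  then have d_j: "real (d j) = (real (d (Suc j)) - 1) * real (s (Suc j)) + real (k (Suc j))"
    by (simp add: field_simps)
  show ?case
  proof (cases "j = 0")
    case True
    then show ?thesis using d_j by (simp add: filter_width_def)
  next
    case False
    have "real (filter_width (Suc j) k s)
            = real (filter_width j k s) + real (k (Suc j) - 1) * (\<Prod>m=1..j. real (s m))"
      using False by (simp add: filter_width_def sum.cl_ivl_Suc del: of_nat_diff)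
    also have "real (k (Suc j) - 1) = real (k (Suc j)) - 1"
      using \<open>k (Suc j) > 0\<close> by (simp add: of_nat_diff)
    finally show ?thesis
      using Suc.IH Suc.prems False d_j by (simp add: prod.cl_ivl_Suc algebra_simps)
  qed
qed

lemma filter_width_le_input_dim:
  assumes arch: "architecture N d k s"
  shows "filter_width N k s \<le> d 0"
proof -
  have "1 \<le> N" "d N > 0" "\<forall>m\<in>{1..N}. s m > 0"
    using arch unfolding architecture_def by auto
  then have "0 \<le> (real (d N) - 1) * (\<Prod>m=1..N. real (s m))"
    by (intro mult_nonneg_nonneg prod_nonneg) auto
  then show ?thesis
    using architecture_input_dim[OF arch \<open>1 \<le> N\<close> order.refl] by linarith
qed

lemma conv_mat_carrier: "conv_mat d' d'' k s w \<in> carrier_mat d'' d'"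
  unfolding conv_mat_def by auto

lemma Pi_net_carrier: "Pi_net N d k s ws \<in> carrier_mat (d N) (d 0)"
proof -
  have "Pi_partial d k s ws i \<in> carrier_mat (d i) (d 0)" for i
    by (induction i) (auto intro!: mult_carrier_mat[OF conv_mat_carrier])
  then show ?thesis unfolding Pi_net_def .
qed

lemma l1norm_pi_filter_le_first_row:
  assumes "architecture N d k s"
  shows "l1norm (pi_filter N d k s ws) \<le> (\<Sum>p<d 0. \<bar>Pi_net N d k s ws $$ (0, p)\<bar>)"
  unfolding l1norm_def pi_filter_def
  using filter_width_le_input_dim[OF assms] by (simp add: sum_mono2)

lemma abs_vec_index_le_l1norm: "i < dim_vec v \<Longrightarrow> \<bar>v $ i\<bar> \<le> l1norm v"
  unfolding l1norm_def by (rule member_le_sum) auto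

lemma abs_entry_le_sum_abs_row:
  fixes Z :: "real mat"
  assumes "i < r" "j < n"
  shows "\<bar>Z $$ (i, j)\<bar> \<le> (\<Sum>i'<r. \<Sum>j'<n. \<bar>Z $$ (i', j')\<bar>)"
proof -
  have "\<bar>Z $$ (i, j)\<bar> \<le> (\<Sum>j'<n. \<bar>Z $$ (i, j')\<bar>)"
    using assms by (intro member_le_sum) auto
  also have "\<dots> \<le> (\<Sum>i'<r. \<Sum>j'<n. \<bar>Z $$ (i', j')\<bar>)"
    using assms by (intro member_le_sum sum_nonneg) auto
  finally show ?thesis .
qed

lemma entries_bounded_by_right_product:
  fixes X :: "real mat"
  assumes X: "X \<in> carrier_mat n m" and det: "det (X * X\<^sup>T) \<noteq> 0"
  obtains M where "0 \<le> M"
    and "\<And>(W :: real mat) r i j. W \<in> carrier_mat r n \<Longrightarrow> i < r \<Longrightarrow> j < n \<Longrightarrow>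
           \<bar>W $$ (i, j)\<bar> \<le> M * (\<Sum>l<m. \<bar>(W * X) $$ (i, l)\<bar>)"
proof -
  have XXT: "X * X\<^sup>T \<in> carrier_mat n n" using X by auto
  obtain B where B: "B \<in> carrier_mat n n" and inv: "X * X\<^sup>T * B = 1\<^sub>m n"
    using det_non_zero_imp_unit[OF XXT det, of "()"] unfolding Units_def ring_mat_def by auto
  define Z where "Z = X\<^sup>T * B"
  have Z: "Z \<in> carrier_mat m n" using X B unfolding Z_def by auto
  define M where "M = (\<Sum>l<m. \<Sum>j<n. \<bar>Z $$ (l, j)\<bar>)"
  show thesis
  proof
    show "0 \<le> M" unfolding M_def by (intro sum_nonneg) auto
    fix W :: "real mat" and r i j assume W: "W \<in> carrier_mat r n" and i: "i < r" and j: "j < n"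
    have "W = W * (X * X\<^sup>T * B)" using W inv by simp
    also have "\<dots> = W * (X * Z)"
      unfolding Z_def using X B by (simp add: assoc_mult_mat[OF X, of _ n _ n])
    also have "\<dots> = (W * X) * Z"
      using W X Z by (simp add: assoc_mult_mat)
    finally have "W = (W * X) * Z" .
    then have "W $$ (i, j) = ((W * X) * Z) $$ (i, j)" by (rule arg_cong)
    also have "\<dots> = (\<Sum>l<m. (W * X) $$ (i, l) * Z $$ (l, j))"
      using W X Z i j
      by (subst index_mult_mat) (auto simp: scalar_prod_def atLeast0LessThan intro!: sum.cong)
    finally have "W $$ (i, j) = (\<Sum>l<m. (W * X) $$ (i, l) * Z $$ (l, j))" .
    then have "\<bar>W $$ (i, j)\<bar> \<le> (\<Sum>l<m. \<bar>(W * X) $$ (i, l)\<bar> * M)"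
      using abs_entry_le_sum_abs_row[OF _ j, of _ m Z] unfolding M_def[symmetric]
      by (auto simp: abs_mult intro!: order.trans[OF sum_abs] sum_mono mult_left_mono)
    then show "\<bar>W $$ (i, j)\<bar> \<le> M * (\<Sum>l<m. \<bar>(W * X) $$ (i, l)\<bar>)"
      by (simp add: sum_distrib_left mult.commute)
  qed
qed

lemma sum_abs_row_le_loss:
  assumes W: "W \<in> carrier_mat r n" and X: "X \<in> carrier_mat n m" and Y: "Y \<in> carrier_mat r m"
    and i: "i < r"
    and loss_bound: "\<And>x y. x \<in> carrier_vec n \<Longrightarrow> y \<in> carrier_vec r \<Longrightarrow>
                       l1norm (W *\<^sub>v x - y) \<le> lossf (W *\<^sub>v x) y + c"
  shows "(\<Sum>l<m. \<bar>(W * X) $$ (i, l)\<bar>)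
           \<le> (\<Sum>l<m. lossf (W *\<^sub>v col X l) (col Y l)) + m * c + (\<Sum>l<m. \<bar>Y $$ (i, l)\<bar>)"
proof -
  have "\<bar>(W * X) $$ (i, l)\<bar> \<le> lossf (W *\<^sub>v col X l) (col Y l) + c + \<bar>Y $$ (i, l)\<bar>"
    if l: "l < m" for l
  proof -
    have "(W * X) $$ (i, l) = (W *\<^sub>v col X l - col Y l) $ i + Y $$ (i, l)"
      using W X Y i l by auto
    moreover have "\<bar>(W *\<^sub>v col X l - col Y l) $ i\<bar> \<le> l1norm (W *\<^sub>v col X l - col Y l)"
      using W Y i by (intro abs_vec_index_le_l1norm) auto
    moreover have "l1norm (W *\<^sub>v col X l - col Y l) \<le> lossf (W *\<^sub>v col X l) (col Y l) + c"
      using X Y l by (intro loss_bound) auto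
    ultimately show ?thesis by linarith
  qed
  then have "(\<Sum>l<m. \<bar>(W * X) $$ (i, l)\<bar>)
               \<le> (\<Sum>l<m. lossf (W *\<^sub>v col X l) (col Y l) + c + \<bar>Y $$ (i, l)\<bar>)"
    by (intro sum_mono) auto
  then show ?thesis by (simp add: sum.distrib)
qed

lemma sum_abs_row_le_scaled_loss:
  assumes W: "W \<in> carrier_mat r n" and X: "X \<in> carrier_mat n m" and Y: "Y \<in> carrier_mat r m"
    and i: "i < r" and "0 \<le> M"
    and M: "\<And>j. j < n \<Longrightarrow> \<bar>W $$ (i, j)\<bar> \<le> M * (\<Sum>l<m. \<bar>(W * X) $$ (i, l)\<bar>)"
    and loss_bound: "\<And>x y. x \<in> carrier_vec n \<Longrightarrow> y \<in> carrier_vec r \<Longrightarrow>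
                       l1norm (W *\<^sub>v x - y) \<le> lossf (W *\<^sub>v x) y + c"
  shows "(\<Sum>j<n. \<bar>W $$ (i, j)\<bar>) \<le> n * M *
           max 0 ((\<Sum>l<m. lossf (W *\<^sub>v col X l) (col Y l)) + m * c + (\<Sum>l<m. \<bar>Y $$ (i, l)\<bar>))"
proof -
  let ?B = "(\<Sum>l<m. lossf (W *\<^sub>v col X l) (col Y l)) + m * c + (\<Sum>l<m. \<bar>Y $$ (i, l)\<bar>)"
  have "\<bar>W $$ (i, j)\<bar> \<le> M * max 0 ?B" if "j < n" for j
    using M[OF that] sum_abs_row_le_loss[OF W X Y i loss_bound] \<open>0 \<le> M\<close>
    by (meson le_max_iff_disj mult_left_mono order.trans)
  then have "(\<Sum>j<n. \<bar>W $$ (i, j)\<bar>) \<le> of_nat (card {..<n}) * (M * max 0 ?B)"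
    by (intro sum_bounded_above) simp
  then show ?thesis by (simp add: mult.assoc)
qed

theorem corollary3p7:
  fixes N m :: nat and d k s :: "nat \<Rightarrow> nat"
    and lossf :: "real vec \<Rightarrow> real vec \<Rightarrow> real"
    and X Y :: "real mat" and c :: real
  assumes arch: "architecture N d k s"
    and X: "X \<in> carrier_mat (d 0) m" and Y: "Y \<in> carrier_mat (d N) m"
    and rank: "vec_space.rank (d 0) (X * X\<^sup>T) = d 0"
    and loss_bound: "\<And>x y W. x \<in> carrier_vec (d 0) \<Longrightarrow> y \<in> carrier_vec (d N) \<Longrightarrow>
                 W \<in> carrier_mat (d N) (d 0) \<Longrightarrow> l1norm (W *\<^sub>v x - y) \<le> lossf (W *\<^sub>v x) y + c"
  shows "\<exists>g :: real \<Rightarrow> real. mono g \<and> (\<forall>t. g t \<ge> 0) \<and>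
           (\<forall>ws. valid_params N k ws \<longrightarrow>
              l1norm (pi_filter N d k s ws) \<le> g (net_loss N d k s lossf m X Y ws))"
proof -
  have "det (X * X\<^sup>T) \<noteq> 0"
    using vec_space.det_rank_iff[of "X * X\<^sup>T" "d 0"] X rank by auto
  then obtain M where "0 \<le> M" and M: "\<And>W r i j. W \<in> carrier_mat r (d 0) \<Longrightarrow> i < r \<Longrightarrow>
      j < d 0 \<Longrightarrow> \<bar>W $$ (i, j)\<bar> \<le> M * (\<Sum>l<m. \<bar>(W * X) $$ (i, l)\<bar>)"
    using entries_bounded_by_right_product[OF X] by blast
  have "d N > 0" using arch unfolding architecture_def by auto
  define g where "g t = d 0 * M * max 0 (t + m * c + (\<Sum>l<m. \<bar>Y $$ (0, l)\<bar>))" for t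
  have "l1norm (pi_filter N d k s ws) \<le> g (net_loss N d k s lossf m X Y ws)" for ws
  proof -
    have W: "Pi_net N d k s ws \<in> carrier_mat (d N) (d 0)" by (rule Pi_net_carrier)
    have "l1norm (pi_filter N d k s ws) \<le> (\<Sum>p<d 0. \<bar>Pi_net N d k s ws $$ (0, p)\<bar>)"
      by (rule l1norm_pi_filter_le_first_row[OF arch])
    also have "\<dots> \<le> g (net_loss N d k s lossf m X Y ws)"
      unfolding g_def net_loss_def
      by (rule sum_abs_row_le_scaled_loss[OF W X Y \<open>d N > 0\<close> \<open>0 \<le> M\<close> M[OF W \<open>d N > 0\<close>]
            loss_bound[OF _ _ W]])
    finally show ?thesis .
  qed
  moreover have "mono g" "\<And>t. g t \<ge> 0"
    unfolding g_def using \<open>0 \<le> M\<close> by (auto intro!: monoI mult_left_mono)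
  ultimately show ?thesis by blast
qed

end
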